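(* Let $\bm u\in\mathbb{C}^{Nd}$ and $\mu\in\mathbb{C}\setminus\{0\}$. Then $\bm u$ is a left eigenvector of $\mathcal N$ corresponding to the eigenvalue $\mu$ (i.e. $\bm u\neq0$ and $\bm u^*\mathcal N(\mu)=0$) if and only if $\bm u$ is a right eigenvector of $\mathcal M$ corresponding to the eigenvalue $\bar\mu$ (i.e. $\bm u\neq0$ and $\mathcal M(\bar\mu)\bm u=0$).
   Context: Setting: $A_j:\mathbb{R}\to\mathbb{R}^{d\times d}$ ($j=0,\dots,h$) smooth and $T$-periodic, $T=N\Delta$, delays $\tau_j=n_j\Delta$ with integers $0=n_0\le n_1<\cdots<n_h$. For $\mu\neq0$ the $Nd\times Nd$ matrix $A(s,\mu)$ is defined blockwise: for $\bm q=(q_1^{\mathrm T},\ldots,q_N^{\mathrm T})^{\mathrm T}$ the $n$-th block of $A(s,\mu)\bm q$ is $\Delta\sum_{j=0}^h A_j((s+n-1)\Delta)\mu^{a_{n-n_j}}q_{b_{n-n_j}}$, with $a_k=\lfloor(k-1)/N\rfloor$, $b_k=((k-1)\bmod N)+1$. Let $B(\mu)=\begin{pmatrix}0&I_{N-1}\\ \mu&0\end{pmatrix}\otimes I_d$. Define $\mathcal N(\mu)\bm v=\bm q(1)-B(\mu)\bm v$ where $\dot{\bm q}(s)=A(s,\mu)\bm q(s)$ on $[0,1]$, $\bm q(0)=\bm v$. Define the "transposed" problem $\mathcal M(\mu)\bm v=\bm p(0)-B(\mu)^{\mathrm T}\bm v$, where $\bm p$ solves $\dot{\bm p}(s)=-A(s,\mu)^{\mathrm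 T}\bm p(s)$, $s\in[0,1]$, $\bm p(1)=\bm v$. Here ${}^*$ denotes conjugate transpose and $\bar\mu$ complex conjugate. *)

theory Defs
  imports Complex_Main "HOL-Analysis.Derivative" "Jordan_Normal_Form.Matrix"
begin

text \<open>Vectors in C^(Nd) are complex vecs of dimension N*d; the component with
  (0-based) index r lies in block n = r div d + 1 (1-based, n = 1..N),
  at position r mod d inside the block.\<close>

definition smooth_fun :: "(real \<Rightarrow> real) \<Rightarrow> bool" where
  "smooth_fun f \<longleftrightarrow> (\<forall>k x. ((deriv ^^ k) f) differentiable (at x))"

definition ak :: "nat \<Rightarrow> int \<Rightarrow> int" where
  "ak N k = (k - 1) div int N"

definition bk :: "nat \<Rightarrow> int \<Rightarrow> nat" where
  "bk N k = nat ((k - 1) mod int N) + 1"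

text \<open>The Nd x Nd matrix A(s,mu); nd j is the integer delay n_j, A j t the d x d matrix A_j(t).\<close>
definition Amat :: "nat \<Rightarrow> nat \<Rightarrow> real \<Rightarrow> nat \<Rightarrow> (nat \<Rightarrow> nat) \<Rightarrow> (nat \<Rightarrow> real \<Rightarrow> real mat)
                     \<Rightarrow> real \<Rightarrow> complex \<Rightarrow> complex mat" where
  "Amat d N \<Delta> h nd A s \<mu> = mat (N * d) (N * d) (\<lambda>(r, c).
      let n = r div d + 1; i = r mod d; m = c div d + 1; l = c mod d in
      complex_of_real \<Delta> * (\<Sum>j\<le>h.
         if bk N (int n - int (nd j)) = m
         then complex_of_real (A j ((s + real n - 1) * \<Delta>) $$ (i, l)) * \<mu> powi ak N (int n - int (nd j))
         else 0))"

text \<open>B(mu) = [[0, I_(N-1)], [mu, 0]] tensor I_d.\<close>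
definition Bmat :: "nat \<Rightarrow> nat \<Rightarrow> complex \<Rightarrow> complex mat" where
  "Bmat d N \<mu> = mat (N * d) (N * d) (\<lambda>(r, c).
      if r mod d = c mod d then
        (if c div d = r div d + 1 then 1
         else if r div d = N - 1 \<and> c div d = 0 then \<mu> else 0)
      else 0)"

definition lin_sol :: "nat \<Rightarrow> (real \<Rightarrow> complex mat) \<Rightarrow> (real \<Rightarrow> complex vec) \<Rightarrow> bool" where
  "lin_sol n M q \<longleftrightarrow> (\<forall>s\<in>{0..1}. q s \<in> carrier_vec n \<and>
      (\<forall>r<n. ((\<lambda>t. q t $ r) has_vector_derivative (M s *\<^sub>v q s) $ r) (at s within {0..1})))"

definition Nop :: "nat \<Rightarrow> nat \<Rightarrow> real \<Rightarrow> nat \<Rightarrow> (nat \<Rightarrow> nat) \<Rightarrow> (nat \<Rightarrow> real \<Rightarrow> real mat)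
                     \<Rightarrow> complex \<Rightarrow> complex vec \<Rightarrow> complex vec" where
  "Nop d N \<Delta> h nd A \<mu> v = (THE w. \<exists>q. lin_sol (N * d) (\<lambda>s. Amat d N \<Delta> h nd A s \<mu>) q \<and>
      q 0 = v \<and> w = q 1 - Bmat d N \<mu> *\<^sub>v v)"

definition Mop :: "nat \<Rightarrow> nat \<Rightarrow> real \<Rightarrow> nat \<Rightarrow> (nat \<Rightarrow> nat) \<Rightarrow> (nat \<Rightarrow> real \<Rightarrow> real mat)
                     \<Rightarrow> complex \<Rightarrow> complex vec \<Rightarrow> complex vec" where
  "Mop d N \<Delta> h nd A \<mu> v = (THE w. \<exists>p. lin_sol (N * d) (\<lambda>s. - transpose_mat (Amat d N \<Delta> h nd A s \<mu>)) p \<and>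
      p 1 = v \<and> w = p 0 - transpose_mat (Bmat d N \<mu>) *\<^sub>v v)"

end

theory Submission
  imports Defs "HOL-Analysis.Henstock_Kurzweil_Integration" "Jordan_Normal_Form.Schur_Decomposition"
begin

text \<open>If q' = A(s,mu) q and p' = -A(s,mu)^* p, the pairing p(s)^* q(s) is constant: its
  derivative is -(A^* p)^* q + p^* A q = 0. Since A(s,mu)^* = A(s,conj mu)^T and
  B(mu)^* = B(conj mu)^T, taking q(0) = v and p(1) = u gives
  u^* N(mu) v = u^* q(1) - u^* B(mu) v = p(0)^* v - (B(mu)^* u)^* v = (M(conj mu) u)^* v
  for every v, so u^* N(mu) = 0 exactly when M(conj mu) u = 0.
  Solutions exist by Picard iteration. As N and M are defined by definite description, uniqueness
  is needed too, and it comes from the same identity: two solutions with equal initial values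
  have end values that pair equally with every adjoint solution, and adjoint solutions can have
  any end value.\<close>

lemma norm_sum_mult_le:
  fixes a b :: "nat \<Rightarrow> 'a::real_normed_algebra"
  assumes "\<And>c. c < n \<Longrightarrow> norm (a c) \<le> B" and "\<And>c. c < n \<Longrightarrow> norm (b c) \<le> V"
    and "0 \<le> B"
  shows "norm (\<Sum>c<n. a c * b c) \<le> n * B * V"
proof -
  have "norm (\<Sum>c<n. a c * b c) \<le> (\<Sum>c<n. norm (a c) * norm (b c))"
    by (intro order.trans[OF norm_sum] sum_mono norm_mult_ineq)
  also have "\<dots> \<le> (\<Sum>c<n. B * V)"
    using assms by (intro sum_mono mult_mono) auto
  finally show ?thesis by simp
qed

lemma norm_integral_le_power:
  fixes f :: "real \<Rightarrow> 'a::banach"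
  assumes "f integrable_on {0..t}" and "0 \<le> t"
    and "\<And>s. s \<in> {0..t} \<Longrightarrow> norm (f s) \<le> C * s ^ k"
  shows "norm (integral {0..t} f) \<le> C * t ^ Suc k / Suc k"
proof -
  have deriv: "((\<lambda>s. C * s ^ Suc k / Suc k) has_vector_derivative C * s ^ k) (at s within {0..t})"
    for s
  proof -
    have "((\<lambda>s. s ^ Suc k) has_real_derivative real (Suc k) * s ^ k) (at s within {0..t})"
      using DERIV_pow[of "Suc k" s] by (simp add: has_field_derivative_at_within)
    then have "((\<lambda>s. C * s ^ Suc k / Suc k) has_real_derivative C * (real (Suc k) * s ^ k) / Suc k)
        (at s within {0..t})"
      by (intro DERIV_cdivide DERIV_cmult)
    then show ?thesis
      by (simp add: has_real_derivative_iff_has_vector_derivative)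
  qed
  have "((\<lambda>s. C * s ^ k) has_integral C * t ^ Suc k / Suc k - C * 0 ^ Suc k / Suc k) {0..t}"
    by (intro fundamental_theorem_of_calculus \<open>0 \<le> t\<close> deriv)
  then have power_integral: "((\<lambda>s. C * s ^ k) has_integral C * t ^ Suc k / Suc k) {0..t}"
    by simp
  have "norm (integral {0..t} f) \<le> integral {0..t} (\<lambda>s. C * s ^ k)"
    using assms(1) has_integral_integrable[OF power_integral] assms(3)
    by (rule integral_norm_bound_integral)
  also have "\<dots> = C * t ^ Suc k / Suc k"
    using power_integral by (rule integral_unique)
  finally show ?thesis .
qed

lemma uniform_limit_sum:
  fixes f :: "'i \<Rightarrow> 'k \<Rightarrow> 'x \<Rightarrow> 'a::real_normed_vector"
  assumes "finite I" and "\<And>i. i \<in> I \<Longrightarrow> uniform_limit S (f i) (l i) F"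
  shows "uniform_limit S (\<lambda>k x. \<Sum>i\<in>I. f i k x) (\<lambda>x. \<Sum>i\<in>I. l i x) F"
  using assms by (induction I rule: finite_induct) (auto intro: uniform_limit_add uniform_limit_const)

lemma continuous_on_if_const:
  "continuous_on S f \<Longrightarrow> continuous_on S (\<lambda>x. if P then f x else c)"
  by (cases P) auto

lemma dim_mat_adjoint [simp]:
  "dim_row (mat_adjoint A) = dim_col A" "dim_col (mat_adjoint A) = dim_row A"
  by (simp_all add: mat_adjoint_def)

lemma mat_adjoint_carrier: "A \<in> carrier_mat m n \<Longrightarrow> mat_adjoint A \<in> carrier_mat n m"
  by auto

lemma index_mat_adjoint:
  "i < dim_col A \<Longrightarrow> j < dim_row A \<Longrightarrow> mat_adjoint A $$ (i, j) = conjugate (A $$ (j, i))"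
  by (simp add: mat_adjoint_def mat_of_rows_def)

lemma row_mat_adjoint: "i < dim_col A \<Longrightarrow> row (mat_adjoint A) i = conjugate (col A i)"
  by (simp add: mat_adjoint_def mat_of_rows_row)

lemma conjugate_mat_adjoint_mult_vec:
  assumes "A \<in> carrier_mat m n" and "u \<in> carrier_vec m"
  shows "conjugate (mat_adjoint A *\<^sub>v u) = transpose_mat A *\<^sub>v conjugate u"
proof (rule eq_vecI)
  fix i assume "i < dim_vec (transpose_mat A *\<^sub>v conjugate u)"
  then have i: "i < n" using assms by simp
  have "conjugate (mat_adjoint A *\<^sub>v u) $ i = conjugate (conjugate (col A i) \<bullet> u)"
    using assms i by (simp add: row_mat_adjoint)
  also have "\<dots> = col A i \<bullet> conjugate u"
    using assms i by (simp add: conjugate_sprod_vec[of _ m])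
  also have "\<dots> = (transpose_mat A *\<^sub>v conjugate u) $ i"
    using assms i by simp
  finally show "conjugate (mat_adjoint A *\<^sub>v u) $ i = (transpose_mat A *\<^sub>v conjugate u) $ i" .
qed (use assms in simp)

lemma conjugate_scalar_prod_mult_mat_vec:
  fixes A :: "'a::conjugatable_field mat"
  assumes "A \<in> carrier_mat m n" and "u \<in> carrier_vec m" and "v \<in> carrier_vec n"
  shows "conjugate u \<bullet> (A *\<^sub>v v) = conjugate (mat_adjoint A *\<^sub>v u) \<bullet> v"
  using assms by (simp add: conjugate_mat_adjoint_mult_vec transpose_vec_mult_scalar)

lemma conjugate_scalar_prod_eq_sum:
  fixes x y :: "complex vec"
  assumes "x \<in> carrier_vec n" and "y \<in> carrier_vec n"
  shows "conjugate x \<bullet> y = (\<Sum>r<n. cnj (x $ r) * y $ r)"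
  using assms by (simp add: scalar_prod_def lessThan_atLeast0)

lemma conjugate_scalar_prod_self_eq_0:
  fixes x :: "'a::conjugatable_ordered_field vec"
  assumes "x \<in> carrier_vec n"
  shows "conjugate x \<bullet> x = 0 \<longleftrightarrow> x = 0\<^sub>v n"
proof -
  have "conjugate x \<bullet> x = x \<bullet>c x"
    using conjugate_vec_sprod_comm[OF assms assms] by (rule sym)
  then show ?thesis
    using conjugate_square_eq_0_vec[OF assms] by (simp only:)
qed

lemma conjugate_scalar_prod_all_eq_0_iff:
  fixes w :: "'a::conjugatable_ordered_field vec"
  assumes "w \<in> carrier_vec n"
  shows "(\<forall>v\<in>carrier_vec n. conjugate w \<bullet> v = 0) \<longleftrightarrow> w = 0\<^sub>v n"
  using assms conjugate_scalar_prod_self_eq_0[OF assms] by auto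

lemma minus_vec_eq_0_iff:
  fixes x y :: "'a::group_add vec"
  assumes "x \<in> carrier_vec n" and "y \<in> carrier_vec n"
  shows "x - y = 0\<^sub>v n \<longleftrightarrow> x = y"
proof
  assume diff: "x - y = 0\<^sub>v n"
  show "x = y"
  proof (rule eq_vecI)
    fix i assume "i < dim_vec y"
    then have "(x - y) $ i = 0"
      using assms diff by simp
    then show "x $ i = y $ i"
      using assms \<open>i < dim_vec y\<close> by simp
  qed (use assms in simp)
qed (use assms in simp)

lemma conjugate_minus_vec:
  fixes x y :: "'a::conjugatable_ring vec"
  assumes "x \<in> carrier_vec n" and "y \<in> carrier_vec n"
  shows "conjugate (x - y) = conjugate x - conjugate y"
proof (rule eq_vecI)
  fix i assume "i < dim_vec (conjugate x - conjugate y)"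
  then have "i < n" using assms by simp
  then show "conjugate (x - y) $ i = (conjugate x - conjugate y) $ i"
    using assms conjugate_dist_add[of "x $ i" "- y $ i"] conjugate_neg[of "y $ i"] by simp
qed (use assms in simp)

text \<open>Starting the iteration at 0 makes the first difference equal to v, so that one bound
  covers all consecutive differences.\<close>
primrec picard_iter ::
  "nat \<Rightarrow> (nat \<Rightarrow> nat \<Rightarrow> real \<Rightarrow> 'a::{banach,real_normed_algebra}) \<Rightarrow> (nat \<Rightarrow> 'a) \<Rightarrow>
    nat \<Rightarrow> real \<Rightarrow> nat \<Rightarrow> 'a"
where
  "picard_iter n m v 0 = (\<lambda>t r. 0)"
| "picard_iter n m v (Suc k) =
     (\<lambda>t r. v r + integral {0..t} (\<lambda>s. \<Sum>c<n. m r c s * picard_iter n m v k s c))"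

locale linear_volterra_system =
  fixes n :: nat and m :: "nat \<Rightarrow> nat \<Rightarrow> real \<Rightarrow> 'a::{banach,real_normed_algebra}"
    and v :: "nat \<Rightarrow> 'a"
  assumes continuous_coeff: "\<And>r c. r < n \<Longrightarrow> c < n \<Longrightarrow> continuous_on {0..1} (m r c)"
begin

lemma coeff_bounded:
  obtains B where "0 \<le> B" "\<And>r c s. r < n \<Longrightarrow> c < n \<Longrightarrow> s \<in> {0..1} \<Longrightarrow> norm (m r c s) \<le> B"
proof -
  have "continuous_on {0..1} (\<lambda>s. \<Sum>r<n. \<Sum>c<n. norm (m r c s))"
    using continuous_coeff by (auto intro!: continuous_on_sum continuous_on_norm)
  then obtain B where B: "\<And>s. s \<in> {0..1} \<Longrightarrow> norm (\<Sum>r<n. \<Sum>c<n. norm (m r c s)) \<le> B"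
    using continuous_on_compact_bound[OF compact_Icc] by blast
  have "norm (m r c s) \<le> B" if "r < n" "c < n" "s \<in> {0..1}" for r c s
  proof -
    have "norm (m r c s) \<le> (\<Sum>c'<n. norm (m r c' s))"
      using that by (intro member_le_sum) auto
    also have "\<dots> \<le> (\<Sum>r'<n. \<Sum>c'<n. norm (m r' c' s))"
      using that by (intro member_le_sum[of r "{..<n}" "\<lambda>r'. \<Sum>c'<n. norm (m r' c' s)"])
                    (auto intro: sum_nonneg)
    also have "\<dots> \<le> B"
      using B[OF that(3)] by simp
    finally show ?thesis .
  qed
  moreover have "0 \<le> B"
    using B[of 0] norm_ge_zero[of "\<Sum>r<n. \<Sum>c<n. norm (m r c 0)"] by simp
  ultimately show thesis using that by blast
qed

lemma picard_iter_continuous: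
  "r < n \<Longrightarrow> continuous_on {0..1} (\<lambda>t. picard_iter n m v k t r)"
proof (induction k arbitrary: r)
  case (Suc k)
  have "continuous_on {0..1} (\<lambda>s. \<Sum>c<n. m r c s * picard_iter n m v k s c)"
    using Suc continuous_coeff by (intro continuous_on_sum continuous_on_mult) auto
  then show ?case
    by (auto intro!: continuous_on_add indefinite_integral_continuous_1 integrable_continuous_interval)
qed simp

lemma picard_iter_integrable:
  "r < n \<Longrightarrow> t \<in> {0..1} \<Longrightarrow> (\<lambda>s. \<Sum>c<n. m r c s * picard_iter n m v k s c) integrable_on {0..t}"
  by (rule integrable_continuous_interval, rule continuous_on_subset[of "{0..1}"])
     (auto intro!: continuous_on_sum continuous_on_mult continuous_coeff picard_iter_continuous)

lemma picard_iter_diff_bound: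
  fixes B V t :: real
  assumes B: "0 \<le> B" "\<And>r c s. r < n \<Longrightarrow> c < n \<Longrightarrow> s \<in> {0..1} \<Longrightarrow> norm (m r c s) \<le> B"
    and V: "\<And>r. r < n \<Longrightarrow> norm (v r) \<le> V"
  shows "t \<in> {0..1} \<Longrightarrow> r < n \<Longrightarrow>
    norm (picard_iter n m v (Suc k) t r - picard_iter n m v k t r) \<le> V * (n * B * t) ^ k / fact k"
proof (induction k arbitrary: t r)
  case 0
  then show ?case using V by simp
next
  case (Suc k)
  let ?P = "picard_iter n m v" and ?K = "real n * B"
  let ?g = "\<lambda>k s. \<Sum>c<n. m r c s * ?P k s c"
  have g_diff: "?g (Suc k) s - ?g k s = (\<Sum>c<n. m r c s * (?P (Suc k) s c - ?P k s c))" for s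
    by (simp add: sum_subtractf[symmetric] right_diff_distrib del: picard_iter.simps)
  have "(\<lambda>s. ?g (Suc k) s - ?g k s) integrable_on {0..t}"
    using Suc.prems by (intro integrable_diff picard_iter_integrable) auto
  then have integrable: "(\<lambda>s. \<Sum>c<n. m r c s * (?P (Suc k) s c - ?P k s c)) integrable_on {0..t}"
    by (simp only: g_diff)
  have "?P (Suc (Suc k)) t r - ?P (Suc k) t r = integral {0..t} (\<lambda>s. ?g (Suc k) s - ?g k s)"
    using Suc.prems by (simp add: integral_diff picard_iter_integrable del: picard_iter.simps) simp
  also have "\<dots> = integral {0..t} (\<lambda>s. \<Sum>c<n. m r c s * (?P (Suc k) s c - ?P k s c))"
    by (simp only: g_diff)
  also have "norm \<dots> \<le> (?K * (V * ?K ^ k / fact k)) * t ^ Suc k / Suc k"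
  proof (rule norm_integral_le_power[OF integrable])
    fix s assume s: "s \<in> {0..t}"
    have "s \<in> {0..1}" using s Suc.prems by auto
    have "norm (\<Sum>c<n. m r c s * (?P (Suc k) s c - ?P k s c)) \<le> ?K * (V * (?K * s) ^ k / fact k)"
      by (rule norm_sum_mult_le) (use Suc.IH Suc.prems B \<open>s \<in> {0..1}\<close> in auto)
    then show "norm (\<Sum>c<n. m r c s * (?P (Suc k) s c - ?P k s c))
        \<le> (?K * (V * ?K ^ k / fact k)) * s ^ k"
      by (simp add: power_mult_distrib mult_ac)
  qed (use Suc.prems in auto)
  also have "\<dots> = V * (?K * t) ^ Suc k / fact (Suc k)"
    unfolding power_mult_distrib fact_Suc power_Suc of_nat_mult by (simp add: mult_ac)
  finally show ?case .
qed

lemma picard_iter_uniform_limit: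
  obtains Q
  where "\<And>r. r < n \<Longrightarrow> uniform_limit {0..1} (\<lambda>k t. picard_iter n m v k t r) (\<lambda>t. Q t r) sequentially"
proof -
  let ?P = "picard_iter n m v"
  obtain B where B: "0 \<le> B" "\<And>r c s. r < n \<Longrightarrow> c < n \<Longrightarrow> s \<in> {0..1} \<Longrightarrow> norm (m r c s) \<le> B"
    using coeff_bounded by blast
  define V where "V = (\<Sum>r<n. norm (v r))"
  have V: "norm (v r) \<le> V" if "r < n" for r
    unfolding V_def using that by (intro member_le_sum) auto
  define K where "K = real n * B"
  have "0 \<le> K" "0 \<le> V"
    using B by (auto simp: K_def V_def intro: sum_nonneg)
  have dominated: "norm (?P (Suc k) t r - ?P k t r) \<le> V * K ^ k / fact k"
    if "t \<in> {0..1}" "r < n" for k t r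
  proof -
    have "norm (?P (Suc k) t r - ?P k t r) \<le> V * (K * t) ^ k / fact k"
      unfolding K_def using picard_iter_diff_bound[OF B V that] .
    also have "\<dots> \<le> V * K ^ k / fact k"
    proof -
      have "(K * t) ^ k \<le> K ^ k"
        using that \<open>0 \<le> K\<close> by (intro power_mono) (auto simp: mult_left_le)
      then show ?thesis
        using \<open>0 \<le> V\<close> by (intro divide_right_mono mult_left_mono) simp_all
    qed
    finally show ?thesis .
  qed
  have "summable (\<lambda>k. V * K ^ k / fact k)"
    using summable_mult[OF summable_exp, of V K] by (simp add: divide_inverse mult_ac)
  then have "uniform_limit {0..1} (\<lambda>k t. \<Sum>i<k. ?P (Suc i) t r - ?P i t r)
      (\<lambda>t. \<Sum>i. ?P (Suc i) t r - ?P i t r) sequentially" if "r < n" for r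
    using dominated that by (intro Weierstrass_m_test) auto
  moreover have "(\<Sum>i<k. ?P (Suc i) t r - ?P i t r) = ?P k t r" for k t r
    using sum_lessThan_telescope[of "\<lambda>i. ?P i t r" k] by simp
  ultimately show thesis
    using that[of "\<lambda>t r. \<Sum>i. ?P (Suc i) t r - ?P i t r"] by simp
qed

lemma integral_equation_solvable:
  obtains Q where "\<And>r. r < n \<Longrightarrow> continuous_on {0..1} (\<lambda>t. Q t r)"
    and "\<And>r t. r < n \<Longrightarrow> t \<in> {0..1} \<Longrightarrow>
      Q t r = v r + integral {0..t} (\<lambda>s. \<Sum>c<n. m r c s * Q s c)"
proof -
  let ?P = "picard_iter n m v"
  obtain Q where lim: "\<And>r. r < n \<Longrightarrow> uniform_limit {0..1} (\<lambda>k t. ?P k t r) (\<lambda>t. Q t r) sequentially"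
    using picard_iter_uniform_limit by blast
  have Q_continuous: "continuous_on {0..1} (\<lambda>t. Q t r)" if "r < n" for r
  proof (rule uniform_limit_theorem[OF _ lim[OF that]])
    show "\<forall>\<^sub>F k in sequentially. continuous_on {0..1} (\<lambda>t. ?P k t r)"
      by (intro always_eventually allI picard_iter_continuous that)
  qed simp
  have "Q t r = v r + integral {0..t} (\<lambda>s. \<Sum>c<n. m r c s * Q s c)"
    if r: "r < n" and t: "t \<in> {0..1}" for r t
  proof -
    have sub: "{0..t} \<subseteq> {0..1}" using t by auto
    have bounded: "bounded (f ` {0..1})" if "continuous_on {0..1} f" for f :: "real \<Rightarrow> 'a"
      using compact_imp_bounded[OF compact_continuous_image[OF that compact_Icc]] .
    have "uniform_limit {0..1} (\<lambda>k s. \<Sum>c<n. m r c s * ?P k s c) (\<lambda>s. \<Sum>c<n. m r c s * Q s c)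
        sequentially"
      using r
      by (intro uniform_limit_sum uniform_lim_mult uniform_limit_const lim bounded continuous_coeff
            Q_continuous) auto
    then have lim_t: "uniform_limit {0..t} (\<lambda>k s. \<Sum>c<n. m r c s * ?P k s c)
        (\<lambda>s. \<Sum>c<n. m r c s * Q s c) sequentially"
      using sub by (rule uniform_limit_on_subset)
    have "continuous_on {0..t} (\<lambda>s. \<Sum>c<n. m r c s * ?P k s c)" for k
      using r
      by (intro continuous_on_subset[OF _ sub] continuous_on_sum continuous_on_mult continuous_coeff
            picard_iter_continuous) auto
    then obtain I J where
      I: "\<And>k. ((\<lambda>s. \<Sum>c<n. m r c s * ?P k s c) has_integral I k) {0..t}" and
      J: "((\<lambda>s. \<Sum>c<n. m r c s * Q s c) has_integral J) {0..t}" and "I \<longlonglongrightarrow> J"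
      using uniform_limit_integral[OF lim_t] by auto
    have "(\<lambda>k. ?P (Suc k) t r) \<longlonglongrightarrow> v r + J"
      using I[THEN integral_unique] \<open>I \<longlonglongrightarrow> J\<close> by (simp add: tendsto_add)
    moreover have "(\<lambda>k. ?P (Suc k) t r) \<longlonglongrightarrow> Q t r"
      using tendsto_uniform_limitI[OF lim[OF r] t] by (rule LIMSEQ_Suc)
    ultimately have "v r + J = Q t r"
      by (rule LIMSEQ_unique)
    then show ?thesis
      by (simp add: integral_unique[OF J])
  qed
  with Q_continuous that show thesis by blast
qed

end

lemma lin_sol_carrier: "lin_sol n M q \<Longrightarrow> s \<in> {0..1} \<Longrightarrow> q s \<in> carrier_vec n"
  unfolding lin_sol_def by blast

lemma lin_sol_exists_initial:
  fixes M :: "real \<Rightarrow> complex mat"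
  assumes carrier: "\<And>s. M s \<in> carrier_mat n n"
    and continuous: "\<And>r c. r < n \<Longrightarrow> c < n \<Longrightarrow> continuous_on {0..1} (\<lambda>s. M s $$ (r, c))"
    and v: "v \<in> carrier_vec n"
  shows "\<exists>q. lin_sol n M q \<and> q 0 = v"
proof -
  interpret linear_volterra_system n "\<lambda>r c s. M s $$ (r, c)" "\<lambda>r. v $ r"
    using continuous by unfold_locales
  obtain Q where Q_continuous: "\<And>r. r < n \<Longrightarrow> continuous_on {0..1} (\<lambda>t. Q t r)"
    and Q_eq: "\<And>r t. r < n \<Longrightarrow> t \<in> {0..1} \<Longrightarrow>
                 Q t r = v $ r + integral {0..t} (\<lambda>s. \<Sum>c<n. M s $$ (r, c) * Q s c)"
    using integral_equation_solvable by blast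
  define q where "q t = vec n (\<lambda>r. Q t r)" for t
  have "lin_sol n M q"
    unfolding lin_sol_def
  proof (intro ballI conjI allI impI)
    show "q s \<in> carrier_vec n" for s by (simp add: q_def)
  next
    fix s :: real and r assume s: "s \<in> {0..1}" and r: "r < n"
    let ?G = "\<lambda>s. \<Sum>c<n. M s $$ (r, c) * Q s c"
    have "continuous_on {0..1} ?G"
      using r by (intro continuous_on_sum continuous_on_mult continuous Q_continuous) auto
    then have "((\<lambda>t. v $ r + integral {0..t} ?G) has_vector_derivative ?G s) (at s within {0..1})"
      using has_vector_derivative_add[OF has_vector_derivative_const integral_has_vector_derivative] s
      by fastforce
    then have "((\<lambda>t. q t $ r) has_vector_derivative ?G s) (at s within {0..1})"
      by (rule has_vector_derivative_transform[OF s, rotated]) (simp add: q_def r Q_eq)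
    moreover have "(M s *\<^sub>v q s) $ r = ?G s"
      using carrier[of s] r by (simp add: q_def scalar_prod_def lessThan_atLeast0)
    ultimately show "((\<lambda>t. q t $ r) has_vector_derivative (M s *\<^sub>v q s) $ r) (at s within {0..1})"
      by simp
  qed
  moreover have "q 0 = v"
    using v Q_eq[of _ 0] by (auto simp: q_def)
  ultimately show ?thesis by blast
qed

lemma lin_sol_reflect:
  fixes M :: "real \<Rightarrow> complex mat"
  assumes carrier: "\<And>s. M s \<in> carrier_mat n n" and q: "lin_sol n (\<lambda>s. - M (1 - s)) q"
  shows "lin_sol n M (\<lambda>s. q (1 - s))"
  unfolding lin_sol_def
proof (intro ballI conjI allI impI)
  fix s :: real assume "s \<in> {0..1}"
  then have "1 - s \<in> {0..1}" by auto
  then show "q (1 - s) \<in> carrier_vec n"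
    using q unfolding lin_sol_def by blast
next
  fix s :: real and r assume s: "s \<in> {0..1}" and r: "r < n"
  have "1 - s \<in> {0..1}" using s by auto
  with q have "q (1 - s) \<in> carrier_vec n \<and> (\<forall>r<n. ((\<lambda>t. q t $ r) has_vector_derivative
      (- M (1 - (1 - s)) *\<^sub>v q (1 - s)) $ r) (at (1 - s) within {0..1}))"
    unfolding lin_sol_def by (rule bspec)
  moreover have "(\<lambda>u::real. 1 - u) ` {0..1} = {0..1}" and "1 - (1 - s) = s"
    by simp_all
  ultimately have q_carrier: "q (1 - s) \<in> carrier_vec n"
    and q_deriv: "((\<lambda>t. q t $ r) has_vector_derivative (- M s *\<^sub>v q (1 - s)) $ r)
                    (at (1 - s) within (\<lambda>u. 1 - u) ` {0..1})"
    using r by (simp_all only:)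
  have "((\<lambda>u::real. 1 - u) has_vector_derivative -1) (at s within {0..1})"
    by (auto simp: has_real_derivative_iff_has_vector_derivative[symmetric]
             intro!: derivative_eq_intros)
  from vector_diff_chain_within[OF this q_deriv]
  have "((\<lambda>t. q (1 - t) $ r) has_vector_derivative (-1::real) *\<^sub>R (- M s *\<^sub>v q (1 - s)) $ r)
      (at s within {0..1})"
    by (simp add: o_def)
  moreover have "(-1::real) *\<^sub>R (- M s *\<^sub>v q (1 - s)) $ r = (M s *\<^sub>v q (1 - s)) $ r"
    using carrier[of s] q_carrier r by simp
  ultimately show "((\<lambda>t. q (1 - t) $ r) has_vector_derivative (M s *\<^sub>v q (1 - s)) $ r)
      (at s within {0..1})"
    by simp
qed

lemma lin_sol_exists_final:
  fixes M :: "real \<Rightarrow> complex mat"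
  assumes carrier: "\<And>s. M s \<in> carrier_mat n n"
    and continuous: "\<And>r c. r < n \<Longrightarrow> c < n \<Longrightarrow> continuous_on {0..1} (\<lambda>s. M s $$ (r, c))"
    and v: "v \<in> carrier_vec n"
  shows "\<exists>p. lin_sol n M p \<and> p 1 = v"
proof -
  have "continuous_on {0..1} (\<lambda>s. (- M (1 - s)) $$ (r, c))" if "r < n" "c < n" for r c
  proof -
    have "continuous_on {0..1} (\<lambda>s. - M (1 - s) $$ (r, c))"
      by (intro continuous_on_minus continuous_on_compose2[OF continuous[OF that]])
         (auto intro!: continuous_intros)
    moreover have "dim_row (M s) = n" "dim_col (M s) = n" for s
      using carrier[of s] by auto
    ultimately show ?thesis
      using that by simp
  qed
  then obtain q where "lin_sol n (\<lambda>s. - M (1 - s)) q" "q 0 = v"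
    using lin_sol_exists_initial[of "\<lambda>s. - M (1 - s)" n v] carrier v by auto
  then show ?thesis
    using lin_sol_reflect[OF carrier] by force
qed

lemma lin_sol_exists_final_adjoint:
  fixes M :: "real \<Rightarrow> complex mat"
  assumes carrier: "\<And>s. M s \<in> carrier_mat n n"
    and continuous: "\<And>r c. r < n \<Longrightarrow> c < n \<Longrightarrow> continuous_on {0..1} (\<lambda>s. M s $$ (r, c))"
    and w: "w \<in> carrier_vec n"
  shows "\<exists>p. lin_sol n (\<lambda>s. - mat_adjoint (M s)) p \<and> p 1 = w"
proof (rule lin_sol_exists_final[OF _ _ w])
  show "- mat_adjoint (M s) \<in> carrier_mat n n" for s
    using carrier[of s] by auto
  fix r c assume "r < n" "c < n"
  then have "(- mat_adjoint (M s)) $$ (r, c) = - cnj (M s $$ (c, r))" for s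
    using carrier[of s] by (simp add: index_mat_adjoint)
  then show "continuous_on {0..1} (\<lambda>s. (- mat_adjoint (M s)) $$ (r, c))"
    using \<open>r < n\<close> \<open>c < n\<close> by (auto intro!: continuous_intros continuous)
qed

lemma lin_sol_adjoint_pairing:
  fixes M :: "real \<Rightarrow> complex mat" and p q :: "real \<Rightarrow> complex vec"
  assumes carrier: "\<And>s. M s \<in> carrier_mat n n"
    and q: "lin_sol n M q" and p: "lin_sol n (\<lambda>s. - mat_adjoint (M s)) p"
  shows "conjugate (p 1) \<bullet> q 1 = conjugate (p 0) \<bullet> q 0"
proof -
  define f where "f s = (\<Sum>r<n. cnj (p s $ r) * q s $ r)" for s
  have f_eq: "f s = conjugate (p s) \<bullet> q s" if "s \<in> {0..1}" for s
    unfolding f_def using lin_sol_carrier[OF p that] lin_sol_carrier[OF q that]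
    by (rule conjugate_scalar_prod_eq_sum[symmetric])
  have "(f has_vector_derivative 0) (at s within {0..1})" if s: "s \<in> {0..1}" for s
  proof -
    let ?q' = "M s *\<^sub>v q s" and ?p' = "- mat_adjoint (M s) *\<^sub>v p s"
    have p_carrier: "p s \<in> carrier_vec n" and q_carrier: "q s \<in> carrier_vec n"
      using lin_sol_carrier p q s by blast+
    have "(f has_vector_derivative (\<Sum>r<n. cnj (p s $ r) * ?q' $ r + cnj (?p' $ r) * q s $ r))
        (at s within {0..1})"
      using p q s unfolding f_def lin_sol_def
      by (intro has_vector_derivative_sum has_vector_derivative_mult has_vector_derivative_cnj) auto
    moreover have "(\<Sum>r<n. cnj (p s $ r) * ?q' $ r + cnj (?p' $ r) * q s $ r)
                   = conjugate (p s) \<bullet> ?q' + conjugate ?p' \<bullet> q s"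
    proof -
      have "?q' \<in> carrier_vec n" and "?p' \<in> carrier_vec n"
        using carrier[of s] mat_adjoint_carrier[OF carrier[of s]] p_carrier q_carrier by auto
      then show ?thesis
        using p_carrier q_carrier by (simp only: sum.distrib conjugate_scalar_prod_eq_sum)
    qed
    moreover have "conjugate ?p' \<bullet> q s = - (conjugate (mat_adjoint (M s) *\<^sub>v p s) \<bullet> q s)"
      using carrier[of s] p_carrier q_carrier
      by (simp add: uminus_conjugate_vec[symmetric])
    moreover have "conjugate (p s) \<bullet> ?q' = conjugate (mat_adjoint (M s) *\<^sub>v p s) \<bullet> q s"
      using carrier[of s] p_carrier q_carrier by (rule conjugate_scalar_prod_mult_mat_vec)
    ultimately show ?thesis by simp
  qed
  then have "f 1 = f 0"
    using has_derivative_zero_constant[of "{0..1::real}" f]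
    unfolding has_vector_derivative_def by fastforce
  then show ?thesis
    by (simp add: f_eq)
qed

lemma lin_sol_unique_final:
  fixes M :: "real \<Rightarrow> complex mat" and q1 q2 :: "real \<Rightarrow> complex vec"
  assumes carrier: "\<And>s. M s \<in> carrier_mat n n"
    and continuous: "\<And>r c. r < n \<Longrightarrow> c < n \<Longrightarrow> continuous_on {0..1} (\<lambda>s. M s $$ (r, c))"
    and q1: "lin_sol n M q1" and q2: "lin_sol n M q2" and "q1 0 = q2 0"
  shows "q1 1 = q2 1"
proof -
  let ?w = "q1 1 - q2 1"
  have q1_carrier: "q1 1 \<in> carrier_vec n" and q2_carrier: "q2 1 \<in> carrier_vec n"
    using lin_sol_carrier[OF q1] lin_sol_carrier[OF q2] by simp_all
  then have "?w \<in> carrier_vec n" by simp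
  from lin_sol_exists_final_adjoint[OF carrier continuous this]
  obtain p where p: "lin_sol n (\<lambda>s. - mat_adjoint (M s)) p" "p 1 = ?w"
    by blast
  have "conjugate ?w \<bullet> q1 1 = conjugate ?w \<bullet> q2 1"
    using lin_sol_adjoint_pairing[OF carrier q1 p(1)] lin_sol_adjoint_pairing[OF carrier q2 p(1)]
      \<open>q1 0 = q2 0\<close> p(2) by simp
  then have "conjugate ?w \<bullet> ?w = 0"
    using q1_carrier q2_carrier by (simp add: scalar_prod_minus_distrib[of _ n])
  then have "?w = 0\<^sub>v n"
    using conjugate_scalar_prod_self_eq_0[of ?w n] q1_carrier q2_carrier by simp
  then show ?thesis
    using minus_vec_eq_0_iff[OF q1_carrier q2_carrier] by simp
qed

lemma lin_sol_unique_initial_adjoint: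
  fixes M :: "real \<Rightarrow> complex mat" and p1 p2 :: "real \<Rightarrow> complex vec"
  assumes carrier: "\<And>s. M s \<in> carrier_mat n n"
    and continuous: "\<And>r c. r < n \<Longrightarrow> c < n \<Longrightarrow> continuous_on {0..1} (\<lambda>s. M s $$ (r, c))"
    and p1: "lin_sol n (\<lambda>s. - mat_adjoint (M s)) p1"
    and p2: "lin_sol n (\<lambda>s. - mat_adjoint (M s)) p2"
    and "p1 1 = p2 1"
  shows "p1 0 = p2 0"
proof -
  let ?w = "p1 0 - p2 0"
  have p1_carrier: "p1 0 \<in> carrier_vec n" and p2_carrier: "p2 0 \<in> carrier_vec n"
    using lin_sol_carrier[OF p1] lin_sol_carrier[OF p2] by simp_all
  then have "?w \<in> carrier_vec n" by simp
  from lin_sol_exists_initial[OF carrier continuous this]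
  obtain q where q: "lin_sol n M q" "q 0 = ?w"
    by blast
  have "conjugate (p1 0) \<bullet> ?w = conjugate (p2 0) \<bullet> ?w"
    using lin_sol_adjoint_pairing[OF carrier q(1) p1] lin_sol_adjoint_pairing[OF carrier q(1) p2]
      \<open>p1 1 = p2 1\<close> q(2) by simp
  then have "conjugate ?w \<bullet> ?w = 0"
    using p1_carrier p2_carrier
    by (simp add: conjugate_minus_vec minus_scalar_prod_distrib[of _ n])
  then have "?w = 0\<^sub>v n"
    using conjugate_scalar_prod_self_eq_0[of ?w n] p1_carrier p2_carrier by simp
  then show ?thesis
    using minus_vec_eq_0_iff[OF p1_carrier p2_carrier] by simp
qed

lemma smooth_fun_continuous_on: "smooth_fun f \<Longrightarrow> continuous_on S f"
proof -
  assume "smooth_fun f"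
  then have "f differentiable (at x)" for x
    unfolding smooth_fun_def by (metis funpow_0)
  then show ?thesis
    by (simp add: continuous_at_imp_continuous_on differentiable_imp_continuous_within)
qed

lemma Amat_carrier: "Amat d N \<Delta> h nd A s \<mu> \<in> carrier_mat (N * d) (N * d)"
  by (simp add: Amat_def)

lemma Bmat_carrier: "Bmat d N \<mu> \<in> carrier_mat (N * d) (N * d)"
  by (simp add: Bmat_def)

lemma continuous_on_Amat_entry:
  assumes smooth: "\<forall>j\<le>h. \<forall>i<d. \<forall>l<d. smooth_fun (\<lambda>t. A j t $$ (i, l))"
    and r: "r < N * d" and c: "c < N * d"
  shows "continuous_on S (\<lambda>s. Amat d N \<Delta> h nd A s \<mu> $$ (r, c))"
proof -
  have "0 < d"
    using r by (auto intro: gr0I)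
  then have "r mod d < d" "c mod d < d"
    by simp_all
  then have A_continuous: "continuous_on UNIV (\<lambda>t. A j t $$ (r mod d, c mod d))"
    if "j \<le> h" for j
    using smooth that by (auto intro: smooth_fun_continuous_on)
  have entry: "continuous_on S (\<lambda>s. complex_of_real (A j (g s) $$ (r mod d, c mod d)))"
    if "j \<le> h" "continuous_on S g" for j g
    by (intro continuous_on_of_real continuous_on_compose2[OF A_continuous[OF that(1)] that(2)]) simp
  show ?thesis
    unfolding Amat_def index_mat[OF r c] Let_def prod.case
    by (intro continuous_intros continuous_on_if_const entry) auto
qed

lemma transpose_Amat_cnj:
  "transpose_mat (Amat d N \<Delta> h nd A s (cnj \<mu>)) = mat_adjoint (Amat d N \<Delta> h nd A s \<mu>)"
  by (rule eq_matI)
     (simp_all add: Amat_def index_mat_adjoint cnj_sum if_distrib[where f = cnj] cong: if_cong)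

lemma transpose_Bmat_cnj: "transpose_mat (Bmat d N (cnj \<mu>)) = mat_adjoint (Bmat d N \<mu>)"
  by (rule eq_matI) (simp_all add: Bmat_def index_mat_adjoint)

context
  fixes d N h :: nat and \<Delta> :: real and nd :: "nat \<Rightarrow> nat" and A :: "nat \<Rightarrow> real \<Rightarrow> real mat"
  assumes smooth: "\<forall>j\<le>h. \<forall>i<d. \<forall>l<d. smooth_fun (\<lambda>t. A j t $$ (i, l))"
begin

lemma Nop_eq:
  assumes q: "lin_sol (N * d) (\<lambda>s. Amat d N \<Delta> h nd A s \<mu>) q" and "q 0 = v"
  shows "Nop d N \<Delta> h nd A \<mu> v = q 1 - Bmat d N \<mu> *\<^sub>v v"
  unfolding Nop_def
proof (rule the_equality)
  show "\<exists>q'. lin_sol (N * d) (\<lambda>s. Amat d N \<Delta> h nd A s \<mu>) q' \<and> q' 0 = v \<and>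
      q 1 - Bmat d N \<mu> *\<^sub>v v = q' 1 - Bmat d N \<mu> *\<^sub>v v"
    using assms by blast
next
  fix w assume "\<exists>q'. lin_sol (N * d) (\<lambda>s. Amat d N \<Delta> h nd A s \<mu>) q' \<and> q' 0 = v \<and>
      w = q' 1 - Bmat d N \<mu> *\<^sub>v v"
  then obtain q' where "lin_sol (N * d) (\<lambda>s. Amat d N \<Delta> h nd A s \<mu>) q'" "q' 0 = v"
    and "w = q' 1 - Bmat d N \<mu> *\<^sub>v v"
    by blast
  with lin_sol_unique_final[OF Amat_carrier continuous_on_Amat_entry[OF smooth] _ q] \<open>q 0 = v\<close>
  show "w = q 1 - Bmat d N \<mu> *\<^sub>v v"
    by simp
qed

lemma Mop_cnj_eq:
  assumes p: "lin_sol (N * d) (\<lambda>s. - mat_adjoint (Amat d N \<Delta> h nd A s \<mu>)) p" and "p 1 = u"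
  shows "Mop d N \<Delta> h nd A (cnj \<mu>) u = p 0 - mat_adjoint (Bmat d N \<mu>) *\<^sub>v u"
  unfolding Mop_def transpose_Amat_cnj transpose_Bmat_cnj
proof (rule the_equality)
  show "\<exists>p'. lin_sol (N * d) (\<lambda>s. - mat_adjoint (Amat d N \<Delta> h nd A s \<mu>)) p' \<and> p' 1 = u \<and>
      p 0 - mat_adjoint (Bmat d N \<mu>) *\<^sub>v u = p' 0 - mat_adjoint (Bmat d N \<mu>) *\<^sub>v u"
    using assms by blast
next
  fix w assume "\<exists>p'. lin_sol (N * d) (\<lambda>s. - mat_adjoint (Amat d N \<Delta> h nd A s \<mu>)) p' \<and> p' 1 = u \<and>
      w = p' 0 - mat_adjoint (Bmat d N \<mu>) *\<^sub>v u"
  then obtain p' where "lin_sol (N * d) (\<lambda>s. - mat_adjoint (Amat d N \<Delta> h nd A s \<mu>)) p'" "p' 1 = u"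
    and "w = p' 0 - mat_adjoint (Bmat d N \<mu>) *\<^sub>v u"
    by blast
  with lin_sol_unique_initial_adjoint[OF Amat_carrier continuous_on_Amat_entry[OF smooth] _ p]
    \<open>p 1 = u\<close>
  show "w = p 0 - mat_adjoint (Bmat d N \<mu>) *\<^sub>v u"
    by simp
qed

lemma Mop_cnj_carrier:
  assumes u: "u \<in> carrier_vec (N * d)"
  shows "Mop d N \<Delta> h nd A (cnj \<mu>) u \<in> carrier_vec (N * d)"
proof -
  obtain p where p: "lin_sol (N * d) (\<lambda>s. - mat_adjoint (Amat d N \<Delta> h nd A s \<mu>)) p" "p 1 = u"
    using lin_sol_exists_final_adjoint[OF Amat_carrier continuous_on_Amat_entry[OF smooth] u]
    by blast
  have "p 0 \<in> carrier_vec (N * d)"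
    using lin_sol_carrier[OF p(1)] by simp
  moreover have "mat_adjoint (Bmat d N \<mu>) *\<^sub>v u \<in> carrier_vec (N * d)"
    using mat_adjoint_carrier[OF Bmat_carrier] u by (rule mult_mat_vec_carrier)
  ultimately show ?thesis
    using Mop_cnj_eq[OF p] by simp
qed

lemma conjugate_scalar_prod_Nop:
  assumes u: "u \<in> carrier_vec (N * d)" and v: "v \<in> carrier_vec (N * d)"
  shows "conjugate u \<bullet> Nop d N \<Delta> h nd A \<mu> v = conjugate (Mop d N \<Delta> h nd A (cnj \<mu>) u) \<bullet> v"
proof -
  let ?M = "\<lambda>s. Amat d N \<Delta> h nd A s \<mu>" and ?B = "Bmat d N \<mu>"
  note continuous = continuous_on_Amat_entry[OF smooth]
  obtain q where q: "lin_sol (N * d) ?M q" "q 0 = v"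
    using lin_sol_exists_initial[OF Amat_carrier continuous v] by blast
  obtain p where p: "lin_sol (N * d) (\<lambda>s. - mat_adjoint (?M s)) p" "p 1 = u"
    using lin_sol_exists_final_adjoint[OF Amat_carrier continuous u] by blast
  have q1: "q 1 \<in> carrier_vec (N * d)" and p0: "p 0 \<in> carrier_vec (N * d)"
    using lin_sol_carrier[OF q(1)] lin_sol_carrier[OF p(1)] by simp_all
  have B: "?B \<in> carrier_mat (N * d) (N * d)"
    and B_adj: "mat_adjoint ?B \<in> carrier_mat (N * d) (N * d)"
    using Bmat_carrier mat_adjoint_carrier by blast+
  have "conjugate u \<bullet> Nop d N \<Delta> h nd A \<mu> v = conjugate u \<bullet> q 1 - conjugate u \<bullet> (?B *\<^sub>v v)"
    unfolding Nop_eq[OF q] using u v q1 B by (simp add: scalar_prod_minus_distrib[of _ "N * d"])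
  also have "conjugate u \<bullet> q 1 = conjugate (p 0) \<bullet> v"
    using lin_sol_adjoint_pairing[OF Amat_carrier q(1) p(1)] p(2) q(2) by simp
  also have "conjugate u \<bullet> (?B *\<^sub>v v) = conjugate (mat_adjoint ?B *\<^sub>v u) \<bullet> v"
    using B u v by (rule conjugate_scalar_prod_mult_mat_vec)
  also have "conjugate (p 0) \<bullet> v - conjugate (mat_adjoint ?B *\<^sub>v u) \<bullet> v
      = conjugate (p 0 - mat_adjoint ?B *\<^sub>v u) \<bullet> v"
    using p0 B_adj u v
    by (simp add: conjugate_minus_vec[of _ "N * d"] minus_scalar_prod_distrib[of _ "N * d"])
  also have "\<dots> = conjugate (Mop d N \<Delta> h nd A (cnj \<mu>) u) \<bullet> v"
    using Mop_cnj_eq[OF p] by simp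
  finally show ?thesis .
qed

end

theorem theorem4p1:
  fixes d N h :: nat and \<Delta> :: real and nd :: "nat \<Rightarrow> nat"
    and A :: "nat \<Rightarrow> real \<Rightarrow> real mat"
    and u :: "complex vec" and \<mu> :: complex
  assumes "d \<ge> 1" and "N \<ge> 1" and "\<Delta> > 0"
    and "nd 0 = 0" and "\<forall>j. 1 \<le> j \<and> j < h \<longrightarrow> nd j < nd (Suc j)"
    and "\<forall>j\<le>h. \<forall>t. A j t \<in> carrier_mat d d"
    and "\<forall>j\<le>h. \<forall>i<d. \<forall>l<d. smooth_fun (\<lambda>t. A j t $$ (i, l))"
    and "\<forall>j\<le>h. \<forall>t. A j (t + real N * \<Delta>) = A j t"
    and "u \<in> carrier_vec (N * d)" and "\<mu> \<noteq> 0"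
  shows "(u \<noteq> 0\<^sub>v (N * d) \<and>
           (\<forall>v\<in>carrier_vec (N * d). conjugate u \<bullet> Nop d N \<Delta> h nd A \<mu> v = 0))
     \<longleftrightarrow> (u \<noteq> 0\<^sub>v (N * d) \<and> Mop d N \<Delta> h nd A (cnj \<mu>) u = 0\<^sub>v (N * d))"
proof -
  \<comment> \<open>Of the hypotheses, only the smoothness of the \<open>A j\<close> (through the continuity of their
    entries) and the dimension of \<open>u\<close> are used.\<close>
  note smooth = assms(7) and u = assms(9)
  have "(\<forall>v\<in>carrier_vec (N * d). conjugate u \<bullet> Nop d N \<Delta> h nd A \<mu> v = 0)
      \<longleftrightarrow> (\<forall>v\<in>carrier_vec (N * d). conjugate (Mop d N \<Delta> h nd A (cnj \<mu>) u) \<bullet> v = 0)"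
    using conjugate_scalar_prod_Nop[OF smooth u] by simp
  also have "\<dots> \<longleftrightarrow> Mop d N \<Delta> h nd A (cnj \<mu>) u = 0\<^sub>v (N * d)"
    by (rule conjugate_scalar_prod_all_eq_0_iff[OF Mop_cnj_carrier[OF smooth u]])
  finally show ?thesis
    by blast
qed

end
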